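(* Let $r$ be a positive integer with $r\le n_i$ for all $i$, let $T=\sum_{j=1}^r e_1^j\otimes\cdots\otimes e_d^j$, $H$ its stabilizer in $G$, and $\Sigma_r=G/H$. Then $G/H$ is reductive if and only if $r=n_1=\cdots=n_d$. Moreover, when $r=n_1=\cdots=n_d$, the orthogonal complement $\mathfrak{m}$ of $\mathfrak{h}$ in $\mathfrak{g}$ (with respect to the inner product $\langle Z,Z'\rangle=\sum_{i=1}^d\mathrm{tr}(Z_iZ_i'^{\mathsf T})$) satisfies $h\mathfrak{m}h^{-1}\subset\mathfrak{m}$ for all $h\in H$.
   Context: Fix integers $d\ge 3$ and $n_1,\dots,n_d\ge 2$. $V=\mathbb{R}^{n_1}\otimes\cdots\otimes\mathbb{R}^{n_d}$, and $G=\mathrm{GL}(n_1)\times\cdots\times\mathrm{GL}(n_d)$ acts on $V$ by $(g_1,\dots,g_d)\cdot(v_1\otimes\cdots\otimes v_d)=(g_1v_1)\otimes\cdots\otimes(g_dv_d)$, extended linearly. $e_i^1,\dots,e_i^{n_i}$ is the standard basis of $\mathbb{R}^{n_i}$. $\mathfrak{g}=\mathfrak{gl}(n_1)\times\cdots\times\mathfrak{gl}(n_d)$ is the Lie algebra of $G$ (tuples $Z=(Z_1,\dots,Z_d)$ of arbitrary $n_i\times n_i$ matrices), $\mathfrak{h}\subset\mathfrak{g}$ is the Lie algebra of the closed subgroup $H$, and $H$ acts on $\mathfrak{g}$ by $hZh^{-1}=(h_1Z_1h_1^{-1},\dots,h_dZ_dh_d^{-1})$. A homogeneous space $G/H$ is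 called reductive if there exists a linear subspace $\mathfrak{p}\subset\mathfrak{g}$ with $\mathfrak{p}\oplus\mathfrak{h}=\mathfrak{g}$ and $h\mathfrak{p}h^{-1}\subset\mathfrak{p}$ for all $h\in H$. *)

theory Defs
  imports "HOL-Analysis.Analysis" "Jordan_Normal_Form.Matrix"
begin

text \<open>Factors are indexed by i < d (0-based), factor i has dimension n i.
  Basis vectors e_i^1..e_i^{n_i} correspond to indices 0..n_i-1.
  Tuples of matrices are functions nat => real mat, normalized to the empty
  matrix for i >= d.\<close>

definition multi_idx :: "nat \<Rightarrow> (nat \<Rightarrow> nat) \<Rightarrow> (nat \<Rightarrow> nat) set" where
  "multi_idx d n = {k. (\<forall>i<d. k i < n i) \<and> (\<forall>i\<ge>d. k i = 0)}"

definition tensor_space :: "nat \<Rightarrow> (nat \<Rightarrow> nat) \<Rightarrow> ((nat \<Rightarrow> nat) \<Rightarrow> real) set" where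
  "tensor_space d n = {T. \<forall>k. k \<notin> multi_idx d n \<longrightarrow> T k = 0}"

text \<open>Action of (g_1,...,g_d) on V (the linear extension of g_1 v_1 (x) ... (x) g_d v_d).\<close>
definition tensor_act :: "nat \<Rightarrow> (nat \<Rightarrow> nat) \<Rightarrow> (nat \<Rightarrow> real mat) \<Rightarrow> ((nat \<Rightarrow> nat) \<Rightarrow> real) \<Rightarrow> ((nat \<Rightarrow> nat) \<Rightarrow> real)" where
  "tensor_act d n g T = (\<lambda>k. if k \<in> multi_idx d n then
      (\<Sum>j\<in>multi_idx d n. (\<Prod>i<d. g i $$ (k i, j i)) * T j) else 0)"

definition GLprod :: "nat \<Rightarrow> (nat \<Rightarrow> nat) \<Rightarrow> (nat \<Rightarrow> real mat) set" where
  "GLprod d n = {g. (\<forall>i<d. g i \<in> carrier_mat (n i) (n i) \<and> invertible_mat (g i)) \<and>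
                    (\<forall>i\<ge>d. g i = 1\<^sub>m 0)}"

definition glprod :: "nat \<Rightarrow> (nat \<Rightarrow> nat) \<Rightarrow> (nat \<Rightarrow> real mat) set" where
  "glprod d n = {Z. (\<forall>i<d. Z i \<in> carrier_mat (n i) (n i)) \<and> (\<forall>i\<ge>d. Z i = 0\<^sub>m 0 0)}"

definition tup_zero :: "nat \<Rightarrow> (nat \<Rightarrow> nat) \<Rightarrow> nat \<Rightarrow> real mat" where
  "tup_zero d n = (\<lambda>i. if i < d then 0\<^sub>m (n i) (n i) else 0\<^sub>m 0 0)"

definition tup_add :: "(nat \<Rightarrow> real mat) \<Rightarrow> (nat \<Rightarrow> real mat) \<Rightarrow> nat \<Rightarrow> real mat" where
  "tup_add X Y = (\<lambda>i. X i + Y i)"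

definition tup_smult :: "real \<Rightarrow> (nat \<Rightarrow> real mat) \<Rightarrow> nat \<Rightarrow> real mat" where
  "tup_smult c X = (\<lambda>i. c \<cdot>\<^sub>m X i)"

definition mat_exp :: "real mat \<Rightarrow> real mat" where
  "mat_exp A = mat (dim_row A) (dim_col A) (\<lambda>(a, b). \<Sum>k. (A ^\<^sub>m k) $$ (a, b) / fact k)"

definition stabilizer :: "nat \<Rightarrow> (nat \<Rightarrow> nat) \<Rightarrow> ((nat \<Rightarrow> nat) \<Rightarrow> real) \<Rightarrow> (nat \<Rightarrow> real mat) set" where
  "stabilizer d n T = {g \<in> GLprod d n. tensor_act d n g T = T}"

definition lie_algebra :: "nat \<Rightarrow> (nat \<Rightarrow> nat) \<Rightarrow> (nat \<Rightarrow> real mat) set \<Rightarrow> (nat \<Rightarrow> real mat) set" where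
  "lie_algebra d n H = {Z \<in> glprod d n. \<forall>t::real. (\<lambda>i. mat_exp (t \<cdot>\<^sub>m Z i)) \<in> H}"

definition mat_inv :: "real mat \<Rightarrow> real mat" where
  "mat_inv A = (SOME B. B \<in> carrier_mat (dim_row A) (dim_row A) \<and>
                        A * B = 1\<^sub>m (dim_row A) \<and> B * A = 1\<^sub>m (dim_row A))"

definition tup_conj :: "(nat \<Rightarrow> real mat) \<Rightarrow> (nat \<Rightarrow> real mat) \<Rightarrow> nat \<Rightarrow> real mat" where
  "tup_conj h Z = (\<lambda>i. h i * Z i * mat_inv (h i))"

definition is_subspace_gl :: "nat \<Rightarrow> (nat \<Rightarrow> nat) \<Rightarrow> (nat \<Rightarrow> real mat) set \<Rightarrow> bool" where
  "is_subspace_gl d n p \<longleftrightarrow> p \<subseteq> glprod d n \<and> tup_zero d n \<in> p \<and>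
     (\<forall>X\<in>p. \<forall>Y\<in>p. tup_add X Y \<in> p) \<and> (\<forall>c. \<forall>X\<in>p. tup_smult c X \<in> p)"

definition reductive :: "nat \<Rightarrow> (nat \<Rightarrow> nat) \<Rightarrow> (nat \<Rightarrow> real mat) set \<Rightarrow> bool" where
  "reductive d n H \<longleftrightarrow> (\<exists>p. is_subspace_gl d n p \<and>
      p \<inter> lie_algebra d n H = {tup_zero d n} \<and>
      (\<forall>Z\<in>glprod d n. \<exists>X\<in>p. \<exists>Y\<in>lie_algebra d n H. Z = tup_add X Y) \<and>
      (\<forall>h\<in>H. \<forall>Z\<in>p. tup_conj h Z \<in> p))"

definition mat_trace :: "real mat \<Rightarrow> real" where
  "mat_trace A = (\<Sum>a<dim_row A. A $$ (a, a))"

definition gl_inner :: "nat \<Rightarrow> (nat \<Rightarrow> real mat) \<Rightarrow> (nat \<Rightarrow> real mat) \<Rightarrow> real" where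
  "gl_inner d Z W = (\<Sum>i<d. mat_trace (Z i * transpose_mat (W i)))"

definition orth_complement :: "nat \<Rightarrow> (nat \<Rightarrow> nat) \<Rightarrow> (nat \<Rightarrow> real mat) set \<Rightarrow> (nat \<Rightarrow> real mat) set" where
  "orth_complement d n S = {Z \<in> glprod d n. \<forall>W\<in>S. gl_inner d Z W = 0}"

text \<open>T = sum_{j=1}^r e_1^j (x) ... (x) e_d^j (0-based: j < r).\<close>
definition diag_tensor :: "nat \<Rightarrow> (nat \<Rightarrow> nat) \<Rightarrow> nat \<Rightarrow> (nat \<Rightarrow> nat) \<Rightarrow> real" where
  "diag_tensor d n r = (\<lambda>k. if k \<in> multi_idx d n \<and> (\<exists>j<r. \<forall>i<d. k i = j) then 1 else 0)"

end

theory Submission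
  imports Defs
begin

text \<open>
  A tuple g fixes T iff, for every multi-index k, the sum over c < r of the products
  g_1(k_1,c) ... g_d(k_d,c) is 1 when k is constant with value below r, and 0 otherwise.
  Differentiating this identity along exp(tZ) shows that every Z in the Lie algebra h of H
  satisfies Z_i(a,c) = 0 for c < r and a \<noteq> c (this needs d \<ge> 3), and sum_i Z_i(c,c) = 0.

  If r < n_i0, the element u = 1 + E_0r in slot i0 lies in H. If p were an H-invariant
  complement of h, the p-component X of E_r0 in slot i0 would have X_i0(r,0) = 1, and p would
  contain (Ad_u - 1)^2 X = -2 E_0r, a nonzero element of h.

  If all n_i = r, then h consists of the diagonal tuples with vanishing slot sums, and its
  orthogonal complement, the tuples whose diagonals agree across slots, is a complement of h.
  For h in H, the vector of products of entries of the slots other than s is killed by the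
  invertible h_s as soon as two of these entries lie in different rows; with d \<ge> 3 this makes
  all h_i monomial with one common support, so conjugation by h permutes diagonal entries in
  the same way in every slot and preserves the complement.
\<close>

section \<open>Matrices\<close>

lemma index_mult_mat_sum:
  assumes "A \<in> carrier_mat n m" "B \<in> carrier_mat m p" "i < n" "j < p"
  shows "(A * B) $$ (i, j) = (\<Sum>k<m. A $$ (i, k) * B $$ (k, j))"
  using assms by (simp add: scalar_prod_def lessThan_atLeast0)

lemma mat_inv_eqI:
  fixes A B :: "real mat"
  assumes A: "A \<in> carrier_mat N N" and B: "B \<in> carrier_mat N N"
    and AB: "A * B = 1\<^sub>m N" and BA: "B * A = 1\<^sub>m N"
  shows "mat_inv A = B"
  unfolding mat_inv_def
proof (rule some_equality)
  fix B' assume "B' \<in> carrier_mat (dim_row A) (dim_row A) \<and>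
    A * B' = 1\<^sub>m (dim_row A) \<and> B' * A = 1\<^sub>m (dim_row A)"
  then have B': "B' \<in> carrier_mat N N" "B' * A = 1\<^sub>m N" using A by auto
  have "B' = B' * (A * B)" using AB B' by simp
  also have "\<dots> = B' * A * B" using assoc_mult_mat[OF B'(1) A B] by simp
  finally show "B' = B" using B B' by simp
qed (use A B AB BA in auto)

lemma invertible_matI:
  fixes A B :: "real mat"
  assumes "A \<in> carrier_mat N N" "B \<in> carrier_mat N N" "A * B = 1\<^sub>m N" "B * A = 1\<^sub>m N"
  shows "invertible_mat A"
  using assms unfolding invertible_mat_def inverts_mat_def
  by (auto simp: square_mat.simps intro!: exI[of _ B])

lemma mat_inv_one [simp]: "mat_inv (1\<^sub>m N :: real mat) = 1\<^sub>m N"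
  by (rule mat_inv_eqI) auto

lemma invertible_mat_inv:
  fixes A :: "real mat"
  assumes A: "A \<in> carrier_mat N N" and inv: "invertible_mat A"
  shows "mat_inv A \<in> carrier_mat N N" "A * mat_inv A = 1\<^sub>m N" "mat_inv A * A = 1\<^sub>m N"
proof -
  obtain B where AB: "A * B = 1\<^sub>m (dim_row A)" and BA: "B * A = 1\<^sub>m (dim_row B)"
    using inv unfolding invertible_mat_def inverts_mat_def by blast
  have B: "B \<in> carrier_mat N N"
    using A AB BA by (metis carrier_matD carrier_matI index_mult_mat(2,3) index_one_mat(2,3))
  have "mat_inv A = B" using mat_inv_eqI[OF A B] AB BA A B by auto
  then show "mat_inv A \<in> carrier_mat N N" "A * mat_inv A = 1\<^sub>m N" "mat_inv A * A = 1\<^sub>m N"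
    using A B AB BA by auto
qed

lemma invertible_mat_col_nonzero:
  fixes A :: "real mat"
  assumes A: "A \<in> carrier_mat N N" "invertible_mat A" and c: "c < N"
  obtains a where "a < N" "A $$ (a, c) \<noteq> 0"
proof (rule ccontr)
  assume "\<not> thesis"
  with that have "A $$ (a, c) = 0" if "a < N" for a using \<open>a < N\<close> by blast
  then have "(mat_inv A * A) $$ (c, c) = 0"
    using index_mult_mat_sum[OF invertible_mat_inv(1)[OF A] A(1) c c] by simp
  then show False using invertible_mat_inv(3)[OF A] c by simp
qed

lemma invertible_mat_mult_vec_eq_0:
  fixes A :: "real mat"
  assumes A: "A \<in> carrier_mat N N" "invertible_mat A" and w: "w \<in> carrier_vec N"
    and Aw: "A *\<^sub>v w = 0\<^sub>v N"
  shows "w = 0\<^sub>v N"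
proof -
  have "w = (mat_inv A * A) *\<^sub>v w" using invertible_mat_inv(3)[OF A] w by simp
  also have "\<dots> = mat_inv A *\<^sub>v (A *\<^sub>v w)" using invertible_mat_inv(1)[OF A] A w by simp
  also have "\<dots> = 0\<^sub>v N"
    unfolding Aw using invertible_mat_inv(1)[OF A] by (intro eq_vecI) (auto simp: scalar_prod_def)
  finally show ?thesis .
qed

lemma mat_trace_mult_transpose:
  fixes A B :: "real mat"
  assumes A: "A \<in> carrier_mat N N" and B: "B \<in> carrier_mat N N"
  shows "mat_trace (A * transpose_mat B) = (\<Sum>x<N. \<Sum>y<N. A $$ (x, y) * B $$ (x, y))"
proof -
  have Bt: "transpose_mat B \<in> carrier_mat N N" using B by simp
  show ?thesis
    unfolding mat_trace_def using A B index_mult_mat_sum[OF A Bt] by (intro sum.cong) auto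
qed

lemma index_conj_diag_monomial:
  fixes G Z :: "real mat"
  assumes G: "G \<in> carrier_mat N N" "invertible_mat G" and Z: "Z \<in> carrier_mat N N" and a: "a < N"
    and mono: "\<And>b c. b < N \<Longrightarrow> c < N \<Longrightarrow> G $$ (a, c) \<noteq> 0 \<Longrightarrow> G $$ (b, c) \<noteq> 0 \<Longrightarrow> b = a"
  shows "(G * Z * mat_inv G) $$ (a, a) = (\<Sum>x<N. if G $$ (a, x) \<noteq> 0 then Z $$ (x, x) else 0)"
proof -
  define Gi where "Gi = mat_inv G"
  have Gi: "Gi \<in> carrier_mat N N" "Gi * G = 1\<^sub>m N" using invertible_mat_inv[OF G] by (auto simp: Gi_def)
  have inv: "Gi $$ (y, a) * G $$ (a, x) = (if y = x then 1 else 0)"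
    if xy: "x < N" "y < N" and nz: "G $$ (a, x) \<noteq> 0" for x y
  proof -
    have "(Gi * G) $$ (y, x) = (\<Sum>e<N. Gi $$ (y, e) * G $$ (e, x))"
      by (rule index_mult_mat_sum[OF Gi(1) G(1) xy(2,1)])
    also have "\<dots> = (\<Sum>e<N. if e = a then Gi $$ (y, a) * G $$ (a, x) else 0)"
      using mono[OF _ xy(1) nz] by (intro sum.cong) auto
    finally show ?thesis using Gi xy a by simp
  qed
  have GZ: "G * Z \<in> carrier_mat N N" using G Z by simp
  have "(G * Z * Gi) $$ (a, a) = (\<Sum>y<N. (\<Sum>x<N. G $$ (a, x) * Z $$ (x, y)) * Gi $$ (y, a))"
    unfolding index_mult_mat_sum[OF GZ Gi(1) a a] using index_mult_mat_sum[OF G(1) Z a] by simp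
  also have "\<dots> = (\<Sum>y<N. \<Sum>x<N. Z $$ (x, y) * (Gi $$ (y, a) * G $$ (a, x)))"
    by (simp add: sum_distrib_left sum_distrib_right mult_ac)
  also have "\<dots> = (\<Sum>x<N. \<Sum>y<N. Z $$ (x, y) * (Gi $$ (y, a) * G $$ (a, x)))"
    by (rule sum.swap)
  also have "\<dots> = (\<Sum>x<N. if G $$ (a, x) \<noteq> 0 then Z $$ (x, x) else 0)"
  proof (rule sum.cong[OF refl])
    fix x assume x: "x \<in> {..<N}"
    show "(\<Sum>y<N. Z $$ (x, y) * (Gi $$ (y, a) * G $$ (a, x))) = (if G $$ (a, x) \<noteq> 0 then Z $$ (x, x) else 0)"
    proof (cases "G $$ (a, x) = 0")
      case False
      then have "(\<Sum>y<N. Z $$ (x, y) * (Gi $$ (y, a) * G $$ (a, x))) = (\<Sum>y<N. if y = x then Z $$ (x, x) else 0)"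
        using inv x by (intro sum.cong) auto
      then show ?thesis using False x by simp
    qed simp
  qed
  finally show ?thesis by (simp add: Gi_def)
qed

lemma mat_inv_one_plus_sqzero:
  fixes M :: "real mat"
  assumes M: "M \<in> carrier_mat N N" and M2: "M * M = 0\<^sub>m N N"
  shows "mat_inv (1\<^sub>m N + M) = 1\<^sub>m N - M" "invertible_mat (1\<^sub>m N + M)"
proof -
  have IM: "1\<^sub>m N - M \<in> carrier_mat N N" "1\<^sub>m N + M \<in> carrier_mat N N" using M by auto
  have "(1\<^sub>m N + M) * (1\<^sub>m N - M) = (1\<^sub>m N - M) + (M * 1\<^sub>m N - M * M)"
    using add_mult_distrib_mat[OF one_carrier_mat M IM(1)] mult_minus_distrib_mat[OF M one_carrier_mat M]
      left_mult_one_mat[OF IM(1)] right_mult_one_mat[OF M]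
    by simp
  also have "\<dots> = 1\<^sub>m N" using M M2 by (intro eq_matI) auto
  finally have "(1\<^sub>m N + M) * (1\<^sub>m N - M) = 1\<^sub>m N" .
  moreover have "(1\<^sub>m N - M) * (1\<^sub>m N + M) = (1\<^sub>m N + M) - (M * 1\<^sub>m N + M * M)"
    using minus_mult_distrib_mat[OF one_carrier_mat M IM(2)] mult_add_distrib_mat[OF M one_carrier_mat M]
      left_mult_one_mat[OF IM(2)] right_mult_one_mat[OF M]
    by simp
  moreover have "\<dots> = 1\<^sub>m N" using M M2 by (intro eq_matI) auto
  ultimately have "(1\<^sub>m N + M) * (1\<^sub>m N - M) = 1\<^sub>m N" "(1\<^sub>m N - M) * (1\<^sub>m N + M) = 1\<^sub>m N"
    by simp_all
  then show "mat_inv (1\<^sub>m N + M) = 1\<^sub>m N - M" "invertible_mat (1\<^sub>m N + M)"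
    using mat_inv_eqI[OF IM(2,1)] invertible_matI[OF IM(2,1)] by auto
qed

definition elem_mat :: "nat \<Rightarrow> nat \<Rightarrow> nat \<Rightarrow> real mat" where
  "elem_mat N a b = mat N N (\<lambda>(x, y). if x = a \<and> y = b then 1 else 0)"

lemma elem_mat_carrier [simp]: "elem_mat N a b \<in> carrier_mat N N"
  and elem_mat_dim [simp]: "dim_row (elem_mat N a b) = N" "dim_col (elem_mat N a b) = N"
  and index_elem_mat [simp]:
    "x < N \<Longrightarrow> y < N \<Longrightarrow> elem_mat N a b $$ (x, y) = (if x = a \<and> y = b then 1 else 0)"
  by (auto simp: elem_mat_def)

lemma index_elem_mat_mult:
  assumes B: "B \<in> carrier_mat N M" and "x < N" "y < M" "b < N"
  shows "(elem_mat N a b * B) $$ (x, y) = (if x = a then B $$ (b, y) else 0)"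
proof -
  have "(elem_mat N a b * B) $$ (x, y) = (\<Sum>k<N. if k = b then (if x = a then B $$ (b, y) else 0) else 0)"
    unfolding index_mult_mat_sum[OF elem_mat_carrier B assms(2,3)] using assms by (intro sum.cong) auto
  then show ?thesis using assms by simp
qed

lemma index_mult_elem_mat:
  assumes B: "B \<in> carrier_mat M N" and "x < M" "y < N" "a < N"
  shows "(B * elem_mat N a b) $$ (x, y) = (if y = b then B $$ (x, a) else 0)"
proof -
  have "(B * elem_mat N a b) $$ (x, y) = (\<Sum>k<N. if k = a then (if y = b then B $$ (x, a) else 0) else 0)"
    unfolding index_mult_mat_sum[OF B elem_mat_carrier assms(2,3)] using assms by (intro sum.cong) auto
  then show ?thesis using assms by simp
qed

lemma elem_mat_sqzero:
  assumes "a \<noteq> b" "b < N"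
  shows "elem_mat N a b * elem_mat N a b = 0\<^sub>m N N"
  by (rule eq_matI) (use assms index_elem_mat_mult[OF elem_mat_carrier] in auto)

text \<open>The slotwise shape of tup_add (tup_conj u Z) (tup_smult (-1) Z).\<close>

definition conj_sub :: "real mat \<Rightarrow> real mat \<Rightarrow> real mat" where
  "conj_sub U A = U * A * mat_inv U + (-1) \<cdot>\<^sub>m A"

lemma conj_sub_one:
  assumes "A \<in> carrier_mat N N"
  shows "conj_sub (1\<^sub>m N) A = 0\<^sub>m N N"
  using assms by (auto simp: conj_sub_def intro!: eq_matI)

lemma conj_sub_one_plus_elem_mat:
  assumes A: "A \<in> carrier_mat N N" and ab: "a < N" "b < N" "a \<noteq> b"
  defines "U \<equiv> 1\<^sub>m N + elem_mat N a b"
  shows "conj_sub U A = mat N N (\<lambda>(x, y).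
    (if x = a then A $$ (b, y) else 0) - (if y = b then A $$ (x, a) + (if x = a then A $$ (b, a) else 0) else 0))"
    (is "_ = ?R")
proof -
  let ?E = "elem_mat N a b"
  have inv: "mat_inv U = 1\<^sub>m N - ?E"
    unfolding U_def by (rule mat_inv_one_plus_sqzero(1)[OF elem_mat_carrier elem_mat_sqzero[OF ab(3,2)]])
  have "U * A = A + ?E * A"
    using add_mult_distrib_mat[OF one_carrier_mat elem_mat_carrier A] A by (simp add: U_def)
  moreover have AEA: "A + ?E * A \<in> carrier_mat N N"
    using A by (meson add_carrier_mat elem_mat_carrier mult_carrier_mat)
  then have "(A + ?E * A) * (1\<^sub>m N - ?E) = (A + ?E * A) - (A + ?E * A) * ?E"
    using mult_minus_distrib_mat[OF AEA one_carrier_mat elem_mat_carrier] right_mult_one_mat[OF AEA]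
    by simp
  ultimately have UAU: "U * A * mat_inv U = (A + ?E * A) - (A + ?E * A) * ?E"
    by (simp add: inv)
  show ?thesis
  proof (rule eq_matI)
    fix x y assume "x < dim_row ?R" "y < dim_col ?R"
    then have xy: "x < N" "y < N" by auto
    have "(A + ?E * A) $$ (x, y) = A $$ (x, y) + (if x = a then A $$ (b, y) else 0)"
      using index_elem_mat_mult[OF A xy ab(2)] A xy by simp
    moreover have "((A + ?E * A) * ?E) $$ (x, y) = (if y = b then (A + ?E * A) $$ (x, a) else 0)"
      by (rule index_mult_elem_mat[OF AEA xy ab(1)])
    moreover have "(A + ?E * A) $$ (x, a) = A $$ (x, a) + (if x = a then A $$ (b, a) else 0)"
      using index_elem_mat_mult[OF A xy(1) ab(1,2)] A xy ab by simp
    ultimately show "conj_sub U A $$ (x, y) = ?R $$ (x, y)"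
      unfolding conj_sub_def UAU using A xy by simp
  qed (use A in \<open>auto simp: conj_sub_def UAU\<close>)
qed

text \<open>As E^2 = 0, Ad_(1+E) - 1 = ad_E + ad_E^2/2 squares to ad_E^2, and ad_E^2 A = -2 E A E.\<close>

lemma conj_sub_one_plus_elem_mat_twice:
  assumes A: "A \<in> carrier_mat N N" and ab: "a < N" "b < N" "a \<noteq> b"
  defines "U \<equiv> 1\<^sub>m N + elem_mat N a b"
  shows "conj_sub U (conj_sub U A) = (-2 * A $$ (b, a)) \<cdot>\<^sub>m elem_mat N a b"
  unfolding U_def conj_sub_one_plus_elem_mat[OF A ab]
  by (subst conj_sub_one_plus_elem_mat) (use ab in \<open>auto intro!: eq_matI\<close>)

section \<open>The matrix exponential\<close>

lemma pow_mat_smult_index: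
  fixes A :: "real mat"
  assumes A: "A \<in> carrier_mat N N" and xy: "x < N" "y < N"
  shows "((t \<cdot>\<^sub>m A) ^\<^sub>m k) $$ (x, y) = t ^ k * (A ^\<^sub>m k) $$ (x, y)"
  using xy(2)
proof (induction k arbitrary: y)
  case (Suc k)
  have "((t \<cdot>\<^sub>m A) ^\<^sub>m Suc k) $$ (x, y) = (\<Sum>c<N. ((t \<cdot>\<^sub>m A) ^\<^sub>m k) $$ (x, c) * (t \<cdot>\<^sub>m A) $$ (c, y))"
    using index_mult_mat_sum[of "(t \<cdot>\<^sub>m A) ^\<^sub>m k" N N "t \<cdot>\<^sub>m A" N x y] A xy Suc.prems by simp
  also have "\<dots> = (\<Sum>c<N. t ^ Suc k * ((A ^\<^sub>m k) $$ (x, c) * A $$ (c, y)))"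
    using Suc A by (intro sum.cong) auto
  also have "\<dots> = t ^ Suc k * (A ^\<^sub>m Suc k) $$ (x, y)"
    using index_mult_mat_sum[of "A ^\<^sub>m k" N N A N x y] A xy Suc.prems by (simp add: sum_distrib_left)
  finally show ?case .
qed (use A xy in simp)

lemma pow_mat_index_bound:
  fixes A :: "real mat"
  assumes A: "A \<in> carrier_mat N N" and xy: "x < N" "y < N"
  shows "\<bar>(A ^\<^sub>m k) $$ (x, y)\<bar> \<le> (\<Sum>a<N. \<Sum>b<N. \<bar>A $$ (a, b)\<bar>) ^ k"
  using xy(2)
proof (induction k arbitrary: y)
  case (Suc k)
  define S where "S = (\<Sum>a<N. \<Sum>b<N. \<bar>A $$ (a, b)\<bar>)"
  have "0 \<le> S" unfolding S_def by (intro sum_nonneg) auto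
  have col: "(\<Sum>c<N. \<bar>A $$ (c, y)\<bar>) \<le> S"
    unfolding S_def by (intro sum_mono member_le_sum) (use Suc.prems in auto)
  have "\<bar>(A ^\<^sub>m Suc k) $$ (x, y)\<bar> = \<bar>\<Sum>c<N. (A ^\<^sub>m k) $$ (x, c) * A $$ (c, y)\<bar>"
    using index_mult_mat_sum[of "A ^\<^sub>m k" N N A N x y] A xy Suc.prems by simp
  also have "\<dots> \<le> (\<Sum>c<N. \<bar>(A ^\<^sub>m k) $$ (x, c)\<bar> * \<bar>A $$ (c, y)\<bar>)"
    by (rule order_trans[OF sum_abs]) (simp add: abs_mult)
  also have "\<dots> \<le> (\<Sum>c<N. S ^ k * \<bar>A $$ (c, y)\<bar>)"
    using Suc.IH unfolding S_def by (intro sum_mono mult_right_mono) auto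
  also have "\<dots> \<le> S ^ k * S"
    using col \<open>0 \<le> S\<close> by (simp add: sum_distrib_left[symmetric] mult_left_mono)
  finally show ?case by (simp add: S_def mult.commute)
qed (use A xy in simp)

lemma mat_exp_smult_index:
  fixes A :: "real mat"
  assumes "A \<in> carrier_mat N N" "x < N" "y < N"
  shows "mat_exp (t \<cdot>\<^sub>m A) $$ (x, y) = (\<Sum>k. (A ^\<^sub>m k) $$ (x, y) / fact k * t ^ k)"
  using assms by (simp add: mat_exp_def pow_mat_smult_index mult.commute)

lemma summable_mat_exp_series:
  fixes A :: "real mat"
  assumes A: "A \<in> carrier_mat N N" and xy: "x < N" "y < N"
  shows "summable (\<lambda>k. (A ^\<^sub>m k) $$ (x, y) / fact k * z ^ k)"
proof (rule summable_comparison_test)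
  define S where "S = (\<Sum>a<N. \<Sum>b<N. \<bar>A $$ (a, b)\<bar>)"
  show "summable (\<lambda>k. inverse (fact k) * (S * \<bar>z\<bar>) ^ k)" by (rule summable_exp)
  have "norm ((A ^\<^sub>m k) $$ (x, y) / fact k * z ^ k) \<le> inverse (fact k) * (S * \<bar>z\<bar>) ^ k" for k
  proof -
    have "norm ((A ^\<^sub>m k) $$ (x, y) / fact k * z ^ k) = \<bar>(A ^\<^sub>m k) $$ (x, y)\<bar> * \<bar>z\<bar> ^ k / fact k"
      by (simp add: abs_mult power_abs)
    also have "\<dots> \<le> S ^ k * \<bar>z\<bar> ^ k / fact k"
      unfolding S_def by (intro divide_right_mono mult_right_mono pow_mat_index_bound[OF A xy]) auto
    finally show ?thesis by (simp add: power_mult_distrib field_simps)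
  qed
  then show "\<exists>N0. \<forall>k\<ge>N0. norm ((A ^\<^sub>m k) $$ (x, y) / fact k * z ^ k) \<le> inverse (fact k) * (S * \<bar>z\<bar>) ^ k"
    by blast
qed

lemma has_field_derivative_mat_exp_index:
  fixes A :: "real mat"
  assumes A: "A \<in> carrier_mat N N" and xy: "x < N" "y < N"
  shows "((\<lambda>t. mat_exp (t \<cdot>\<^sub>m A) $$ (x, y)) has_field_derivative A $$ (x, y)) (at 0)"
proof -
  let ?c = "\<lambda>k. (A ^\<^sub>m k) $$ (x, y) / fact k"
  have "((\<lambda>t. \<Sum>k. ?c k * t ^ k) has_field_derivative (\<Sum>k. diffs ?c k * 0 ^ k)) (at 0)"
    by (rule termdiffs_strong_converges_everywhere) (rule summable_mat_exp_series[OF A xy])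
  moreover have "(\<Sum>k. diffs ?c k * 0 ^ k) = diffs ?c 0" by (rule powser_zero)
  moreover have "diffs ?c 0 = A $$ (x, y)" using A xy by (simp add: diffs_def)
  ultimately show ?thesis using mat_exp_smult_index[OF A xy] by simp
qed

lemma mat_exp_zero_index:
  fixes A :: "real mat"
  assumes A: "A \<in> carrier_mat N N" and xy: "x < N" "y < N"
  shows "mat_exp (0 \<cdot>\<^sub>m A) $$ (x, y) = (if x = y then 1 else 0)"
proof -
  have "mat_exp (0 \<cdot>\<^sub>m A) $$ (x, y) = (\<Sum>k. (A ^\<^sub>m k) $$ (x, y) / fact k * 0 ^ k)"
    by (rule mat_exp_smult_index[OF A xy])
  also have "\<dots> = (A ^\<^sub>m 0) $$ (x, y) / fact 0" by (rule powser_zero)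
  finally show ?thesis using A xy by simp
qed

lemma mat_exp_sqzero:
  fixes M :: "real mat"
  assumes M: "M \<in> carrier_mat N N" "M * M = 0\<^sub>m N N"
  shows "mat_exp (t \<cdot>\<^sub>m M) = 1\<^sub>m N + t \<cdot>\<^sub>m M"
proof -
  have pow: "M ^\<^sub>m Suc (Suc k) = 0\<^sub>m N N" for k
  proof (induction k)
    case (Suc k)
    then show ?case using M by (simp del: pow_mat.simps add: pow_mat.simps(2)[of M "Suc (Suc k)"])
  qed (use M in simp)
  have "mat_exp (t \<cdot>\<^sub>m M) $$ (x, y) = (1\<^sub>m N + t \<cdot>\<^sub>m M) $$ (x, y)" if xy: "x < N" "y < N" for x y
  proof -
    have "mat_exp (t \<cdot>\<^sub>m M) $$ (x, y) = (\<Sum>k<2. (M ^\<^sub>m k) $$ (x, y) / fact k * t ^ k)"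
      unfolding mat_exp_smult_index[OF M(1) xy]
    proof (rule suminf_finite)
      fix k :: nat assume "k \<notin> {..<2}"
      then obtain j where "k = Suc (Suc j)" by (metis lessThan_iff add_2_eq_Suc le_Suc_ex not_less)
      then show "(M ^\<^sub>m k) $$ (x, y) / fact k * t ^ k = 0" using pow[of j] xy by simp
    qed simp
    then show ?thesis using M xy by (simp add: numeral_2_eq_2)
  qed
  then show ?thesis using M by (intro eq_matI) (auto simp: mat_exp_def)
qed

lemma mat_exp_diagonal:
  fixes D :: "real mat"
  assumes D: "D \<in> carrier_mat N N"
    and diag: "\<And>x y. x < N \<Longrightarrow> y < N \<Longrightarrow> x \<noteq> y \<Longrightarrow> D $$ (x, y) = 0"
  shows "mat_exp (t \<cdot>\<^sub>m D) = mat_diag N (\<lambda>x. exp (t * D $$ (x, x)))"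
proof -
  have pow: "(D ^\<^sub>m k) $$ (x, y) = (if x = y then D $$ (x, x) ^ k else 0)" if xy: "x < N" "y < N" for k x y
    using xy(2)
  proof (induction k arbitrary: y)
    case (Suc k)
    have "(D ^\<^sub>m Suc k) $$ (x, y) = (\<Sum>c<N. (D ^\<^sub>m k) $$ (x, c) * D $$ (c, y))"
      using index_mult_mat_sum[of "D ^\<^sub>m k" N N D N x y] D xy Suc.prems by simp
    also have "\<dots> = (\<Sum>c<N. if c = x then D $$ (x, x) ^ k * D $$ (x, y) else 0)"
      using Suc.IH by (intro sum.cong) auto
    finally show ?case using xy diag Suc.prems by simp
  qed (use D xy in simp)
  have "mat_exp (t \<cdot>\<^sub>m D) $$ (x, y) = mat_diag N (\<lambda>x. exp (t * D $$ (x, x))) $$ (x, y)"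
    if xy: "x < N" "y < N" for x y
  proof -
    have "mat_exp (t \<cdot>\<^sub>m D) $$ (x, y) = (\<Sum>k. if x = y then (t * D $$ (x, x)) ^ k /\<^sub>R fact k else 0)"
      unfolding mat_exp_smult_index[OF D xy]
      using pow[OF xy] by (intro suminf_cong) (simp add: power_mult_distrib field_simps)
    then show ?thesis using xy by (simp add: mat_diag_def exp_def)
  qed
  then show ?thesis using D by (intro eq_matI) (auto simp: mat_exp_def mat_diag_def)
qed

section \<open>The stabilizer of the diagonal tensor\<close>

lemma third_index:
  fixes d p q :: nat
  assumes "3 \<le> d" "p < d" "q < d"
  obtains s where "s < d" "s \<noteq> p" "s \<noteq> q"
proof -
  have "\<exists>s::nat. s < 3 \<and> s \<noteq> p \<and> s \<noteq> q" by presburger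
  then show ?thesis using that assms by (meson less_le_trans)
qed

lemma finite_multi_idx: "finite (multi_idx d n)"
proof -
  have "multi_idx d n \<subseteq> (\<lambda>f i. if i < d then f i else 0) ` (PiE {..<d} (\<lambda>i. {..<n i}))"
  proof
    fix k assume k: "k \<in> multi_idx d n"
    show "k \<in> (\<lambda>f i. if i < d then f i else 0) ` (PiE {..<d} (\<lambda>i. {..<n i}))"
    proof
      show "restrict k {..<d} \<in> PiE {..<d} (\<lambda>i. {..<n i})" using k by (auto simp: multi_idx_def)
      show "k = (\<lambda>i. if i < d then restrict k {..<d} i else 0)" using k by (auto simp: multi_idx_def)
    qed
  qed
  then show ?thesis by (rule finite_subset) (intro finite_imageI finite_PiE; simp)
qed

definition diag_idx :: "nat \<Rightarrow> nat \<Rightarrow> nat \<Rightarrow> nat" where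
  "diag_idx d c = (\<lambda>i. if i < d then c else 0)"

lemma tensor_act_diag_tensor:
  assumes d: "0 < d" and rn: "\<forall>i<d. r \<le> n i" and k: "k \<in> multi_idx d n"
  shows "tensor_act d n g (diag_tensor d n r) k = (\<Sum>c<r. \<Prod>i<d. g i $$ (k i, c))"
proof -
  let ?P = "\<lambda>j. \<exists>c<r. \<forall>i<d. j i = c"
  have "tensor_act d n g (diag_tensor d n r) k =
      (\<Sum>j\<in>multi_idx d n. if ?P j then (\<Prod>i<d. g i $$ (k i, j i)) else 0)"
    unfolding tensor_act_def diag_tensor_def if_P[OF k] by (intro sum.cong) (auto simp del: bex_simps)
  also have "\<dots> = (\<Sum>j\<in>{j\<in>multi_idx d n. ?P j}. \<Prod>i<d. g i $$ (k i, j i))"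
    by (rule sum.inter_filter[symmetric, OF finite_multi_idx])
  also have "{j\<in>multi_idx d n. ?P j} = diag_idx d ` {..<r}"
    using rn by (auto simp: diag_idx_def multi_idx_def image_iff fun_eq_iff less_le_trans)
  also have "(\<Sum>j\<in>diag_idx d ` {..<r}. \<Prod>i<d. g i $$ (k i, j i)) = (\<Sum>c<r. \<Prod>i<d. g i $$ (k i, diag_idx d c i))"
    using d by (intro sum.reindex[unfolded comp_def]) (auto simp: inj_on_def diag_idx_def fun_eq_iff)
  also have "\<dots> = (\<Sum>c<r. \<Prod>i<d. g i $$ (k i, c))"
    by (intro sum.cong prod.cong) (auto simp: diag_idx_def)
  finally show ?thesis .
qed

lemma mem_stabilizer_diag_tensor:
  assumes d: "0 < d" and rn: "\<forall>i<d. r \<le> n i"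
  shows "g \<in> stabilizer d n (diag_tensor d n r) \<longleftrightarrow> g \<in> GLprod d n \<and>
    (\<forall>k\<in>multi_idx d n. (\<Sum>c<r. \<Prod>i<d. g i $$ (k i, c)) = (if \<exists>c<r. \<forall>i<d. k i = c then 1 else 0))"
proof -
  have "tensor_act d n g (diag_tensor d n r) = diag_tensor d n r \<longleftrightarrow>
      (\<forall>k\<in>multi_idx d n. tensor_act d n g (diag_tensor d n r) k = diag_tensor d n r k)"
    by (auto simp: fun_eq_iff tensor_act_def diag_tensor_def)
  moreover have "diag_tensor d n r k = (if \<exists>c<r. \<forall>i<d. k i = c then 1 else 0)"
    if "k \<in> multi_idx d n" for k
    using that by (simp add: diag_tensor_def)
  ultimately show ?thesis
    unfolding stabilizer_def by (simp add: tensor_act_diag_tensor[OF d rn])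
qed

lemma stabilizer_diag_tensor_eq:
  assumes d: "0 < d" and rn: "\<forall>i<d. r \<le> n i"
    and g: "g \<in> stabilizer d n (diag_tensor d n r)" and k: "k \<in> multi_idx d n"
  shows "(\<Sum>c<r. \<Prod>i<d. g i $$ (k i, c)) = (if \<exists>c<r. \<forall>i<d. k i = c then 1 else 0)"
  using g k unfolding mem_stabilizer_diag_tensor[OF d rn] by blast

lemma diag_tensor_stabilizerI:
  assumes d: "0 < d" and rn: "\<forall>i<d. r \<le> n i" and g: "g \<in> GLprod d n"
    and col: "\<And>i x c. i < d \<Longrightarrow> x < n i \<Longrightarrow> c < r \<Longrightarrow> g i $$ (x, c) = (if x = c then \<mu> i c else 0)"
    and prod_one: "\<And>c. c < r \<Longrightarrow> (\<Prod>i<d. \<mu> i c) = 1"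
  shows "g \<in> stabilizer d n (diag_tensor d n r)"
  unfolding mem_stabilizer_diag_tensor[OF d rn]
proof (intro conjI g ballI)
  fix k assume k: "k \<in> multi_idx d n"
  have "(\<Prod>i<d. g i $$ (k i, c)) = (if \<forall>i<d. k i = c then 1 else 0)" if c: "c < r" for c
  proof (cases "\<forall>i<d. k i = c")
    case True
    then show ?thesis using col k c prod_one by (simp add: multi_idx_def)
  next
    case False
    then obtain i where "i < d" "k i \<noteq> c" by auto
    then show ?thesis using col k c by (auto simp: multi_idx_def intro!: prod_zero bexI[of _ i])
  qed
  then have "(\<Sum>c<r. \<Prod>i<d. g i $$ (k i, c)) = (\<Sum>c<r. if \<forall>i<d. k i = c then 1 else 0)"
    by simp
  also have "\<dots> = (if \<exists>c<r. \<forall>i<d. k i = c then 1 else 0)"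
  proof (cases "\<exists>c<r. \<forall>i<d. k i = c")
    case True
    then obtain c0 where c0: "c0 < r" "\<forall>i<d. k i = c0" by auto
    then have "(\<Sum>c<r. if \<forall>i<d. k i = c then 1 else 0) = (\<Sum>c<r. if c = c0 then 1 else (0::real))"
      using d by (intro sum.cong) auto
    then show ?thesis using c0 True by simp
  qed (auto intro: sum.neutral)
  finally show "(\<Sum>c<r. \<Prod>i<d. g i $$ (k i, c)) = (if \<exists>c<r. \<forall>i<d. k i = c then 1 else 0)" .
qed

definition sqzero_tuples :: "nat \<Rightarrow> (nat \<Rightarrow> nat) \<Rightarrow> nat \<Rightarrow> (nat \<Rightarrow> real mat) set" where
  "sqzero_tuples d n r = {M \<in> glprod d n. \<forall>i<d. M i * M i = 0\<^sub>m (n i) (n i) \<and> (\<forall>x<n i. \<forall>c<r. M i $$ (x, c) = 0)}"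

definition tup_unip :: "nat \<Rightarrow> (nat \<Rightarrow> nat) \<Rightarrow> (nat \<Rightarrow> real mat) \<Rightarrow> nat \<Rightarrow> real mat" where
  "tup_unip d n M = (\<lambda>i. if i < d then 1\<^sub>m (n i) + M i else 1\<^sub>m 0)"

lemma tup_unip_mem_stabilizer:
  assumes d: "0 < d" and rn: "\<forall>i<d. r \<le> n i" and M: "M \<in> sqzero_tuples d n r"
  shows "tup_unip d n M \<in> stabilizer d n (diag_tensor d n r)"
proof (rule diag_tensor_stabilizerI[OF d rn, where \<mu> = "\<lambda>i c. 1"])
  have "M i \<in> carrier_mat (n i) (n i)" "M i * M i = 0\<^sub>m (n i) (n i)" if "i < d" for i
    using M that by (auto simp: sqzero_tuples_def glprod_def)
  then show "tup_unip d n M \<in> GLprod d n"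
    using mat_inv_one_plus_sqzero(2) by (auto simp: GLprod_def tup_unip_def)
  fix i x c assume "i < d" "x < n i" "c < r"
  then show "tup_unip d n M i $$ (x, c) = (if x = c then 1 else 0)"
    using M rn by (auto simp: tup_unip_def sqzero_tuples_def glprod_def less_le_trans)
qed simp

lemma sqzero_tuples_smult:
  assumes rn: "\<forall>i<d. r \<le> n i" and M: "M \<in> sqzero_tuples d n r"
  shows "tup_smult t M \<in> sqzero_tuples d n r"
  unfolding sqzero_tuples_def
proof (intro CollectI conjI allI impI)
  have Mc: "M i \<in> carrier_mat (n i) (n i)" if "i < d" for i
    using M that by (auto simp: sqzero_tuples_def glprod_def)
  show "tup_smult t M \<in> glprod d n" using M by (auto simp: sqzero_tuples_def glprod_def tup_smult_def)
  fix i assume i: "i < d"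
  have "t \<cdot>\<^sub>m M i * (t \<cdot>\<^sub>m M i) = t \<cdot>\<^sub>m (t \<cdot>\<^sub>m (M i * M i))"
    using mult_smult_assoc_mat[OF Mc[OF i] smult_carrier_mat[OF Mc[OF i]]]
      mult_smult_distrib[OF Mc[OF i] Mc[OF i]] by simp
  then show "tup_smult t M i * tup_smult t M i = 0\<^sub>m (n i) (n i)"
    using M i by (auto simp: sqzero_tuples_def tup_smult_def intro!: eq_matI)
  fix x c assume "x < n i" "c < r"
  then show "tup_smult t M i $$ (x, c) = 0"
    using M i rn carrier_matD[OF Mc[OF i]] by (auto simp: sqzero_tuples_def tup_smult_def)
qed

section \<open>The Lie algebra of the stabilizer\<close>

lemma sqzero_tuples_subset_lie_algebra:
  assumes d: "0 < d" and rn: "\<forall>i<d. r \<le> n i"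
  shows "sqzero_tuples d n r \<subseteq> lie_algebra d n (stabilizer d n (diag_tensor d n r))"
proof
  fix M assume M: "M \<in> sqzero_tuples d n r"
  have "(\<lambda>i. mat_exp (t \<cdot>\<^sub>m M i)) = tup_unip d n (tup_smult t M)" for t
  proof
    fix i show "mat_exp (t \<cdot>\<^sub>m M i) = tup_unip d n (tup_smult t M) i"
    proof (cases "i < d")
      case True
      then show ?thesis
        using M mat_exp_sqzero by (auto simp: tup_unip_def tup_smult_def sqzero_tuples_def glprod_def)
    next
      case False
      then show ?thesis
        using M by (auto simp: tup_unip_def sqzero_tuples_def glprod_def mat_exp_def intro!: eq_matI)
    qed
  qed
  then show "M \<in> lie_algebra d n (stabilizer d n (diag_tensor d n r))"
    using M tup_unip_mem_stabilizer[OF d rn sqzero_tuples_smult[OF rn]]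
    by (simp add: lie_algebra_def sqzero_tuples_def)
qed

lemma diagonal_tuple_mem_lie_algebra:
  assumes d: "0 < d" and rn: "\<forall>i<d. r \<le> n i" and Z: "Z \<in> glprod d n"
    and diag: "\<And>i x y. i < d \<Longrightarrow> x < n i \<Longrightarrow> y < n i \<Longrightarrow> x \<noteq> y \<Longrightarrow> Z i $$ (x, y) = 0"
    and trace: "\<And>c. c < r \<Longrightarrow> (\<Sum>i<d. Z i $$ (c, c)) = 0"
  shows "Z \<in> lie_algebra d n (stabilizer d n (diag_tensor d n r))"
  unfolding lie_algebra_def
proof (intro CollectI conjI allI Z)
  fix t :: real
  have Zc: "\<And>i. i < d \<Longrightarrow> Z i \<in> carrier_mat (n i) (n i)" and Zd: "\<And>i. d \<le> i \<Longrightarrow> Z i = 0\<^sub>m 0 0"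
    using Z by (auto simp: glprod_def)
  have exp: "mat_exp (t \<cdot>\<^sub>m Z i) = mat_diag (n i) (\<lambda>x. exp (t * Z i $$ (x, x)))" if "i < d" for i
    using mat_exp_diagonal[OF Zc diag] that by blast
  show "(\<lambda>i. mat_exp (t \<cdot>\<^sub>m Z i)) \<in> stabilizer d n (diag_tensor d n r)"
  proof (rule diag_tensor_stabilizerI[OF d rn, where \<mu> = "\<lambda>i c. exp (t * Z i $$ (c, c))"])
    have "invertible_mat (mat_diag N (\<lambda>x. exp (g x)))" for N and g :: "nat \<Rightarrow> real"
      by (rule invertible_matI[of _ N "mat_diag N (\<lambda>x. exp (- g x))"]) (simp_all add: exp_add[symmetric])
    then show "(\<lambda>i. mat_exp (t \<cdot>\<^sub>m Z i)) \<in> GLprod d n"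
      using Zd exp by (auto simp: GLprod_def mat_exp_def intro!: eq_matI)
  next
    fix i x c assume "i < d" "x < n i" "c < r"
    then show "mat_exp (t \<cdot>\<^sub>m Z i) $$ (x, c) = (if x = c then exp (t * Z i $$ (c, c)) else 0)"
      using exp rn by (auto simp: mat_diag_def)
  next
    fix c assume "c < r"
    then show "(\<Prod>i<d. exp (t * Z i $$ (c, c))) = 1"
      using trace by (simp add: exp_sum[symmetric] sum_distrib_left[symmetric])
  qed
qed

text \<open>The derivative at t = 0 of the stabilizer equation for exp(tZ); at t = 0 the factors
  of the products are Kronecker deltas.\<close>

lemma lie_algebra_stabilizer_tangent:
  assumes d: "0 < d" and rn: "\<forall>i<d. r \<le> n i"
    and Z: "Z \<in> lie_algebra d n (stabilizer d n (diag_tensor d n r))" and k: "k \<in> multi_idx d n"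
  shows "(\<Sum>c<r. \<Sum>i<d. if \<forall>l<d. l \<noteq> i \<longrightarrow> k l = c then Z i $$ (k i, c) else 0) = 0"
proof -
  have Zc: "\<And>i. i < d \<Longrightarrow> Z i \<in> carrier_mat (n i) (n i)"
    using Z by (auto simp: lie_algebra_def glprod_def)
  have kn: "\<And>i. i < d \<Longrightarrow> k i < n i" using k by (auto simp: multi_idx_def)
  have cn: "\<And>i c. i < d \<Longrightarrow> c < r \<Longrightarrow> c < n i" using rn by (auto simp: less_le_trans)
  define F where "F t = (\<Sum>c<r. \<Prod>i<d. mat_exp (t \<cdot>\<^sub>m Z i) $$ (k i, c))" for t
  have "F = (\<lambda>t. if \<exists>c<r. \<forall>i<d. k i = c then 1 else 0)"
    using Z k unfolding F_def lie_algebra_def mem_stabilizer_diag_tensor[OF d rn] by auto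
  then have "(F has_field_derivative 0) (at 0)" by simp
  moreover have "(F has_field_derivative (\<Sum>c<r. \<Sum>i<d. Z i $$ (k i, c) *
      (\<Prod>l\<in>{..<d} - {i}. mat_exp (0 \<cdot>\<^sub>m Z l) $$ (k l, c)))) (at 0)"
    unfolding F_def
    by (intro DERIV_sum has_field_derivative_prod has_field_derivative_mat_exp_index[OF Zc kn cn]) auto
  ultimately have "(\<Sum>c<r. \<Sum>i<d. Z i $$ (k i, c) *
      (\<Prod>l\<in>{..<d} - {i}. mat_exp (0 \<cdot>\<^sub>m Z l) $$ (k l, c))) = 0"
    using DERIV_unique by blast
  moreover have "(\<Prod>l\<in>{..<d} - {i}. mat_exp (0 \<cdot>\<^sub>m Z l) $$ (k l, c)) =
      (if \<forall>l<d. l \<noteq> i \<longrightarrow> k l = c then 1 else 0)" if "c < r" for c i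
  proof (cases "\<forall>l<d. l \<noteq> i \<longrightarrow> k l = c")
    case True
    then show ?thesis using mat_exp_zero_index[OF Zc kn cn] \<open>c < r\<close> by (auto intro!: prod.neutral)
  next
    case False
    then obtain l where "l < d" "l \<noteq> i" "k l \<noteq> c" by blast
    then show ?thesis
      using mat_exp_zero_index[OF Zc kn cn] \<open>c < r\<close> by (auto intro!: prod_zero bexI[of _ l])
  qed
  ultimately show ?thesis by (simp add: if_distrib cong: if_cong)
qed

lemma lie_algebra_stabilizer_col_offdiag:
  assumes d: "3 \<le> d" and rn: "\<forall>i<d. r \<le> n i"
    and Z: "Z \<in> lie_algebra d n (stabilizer d n (diag_tensor d n r))"
    and i0: "i0 < d" and a: "a < n i0" and j: "j < r" and aj: "a \<noteq> j"
  shows "Z i0 $$ (a, j) = 0"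
proof -
  define k where "k i = (if i = i0 then a else if i < d then j else 0)" for i
  have k: "k \<in> multi_idx d n" using a j rn i0 by (auto simp: k_def multi_idx_def less_le_trans)
  have summand: "(if \<forall>l<d. l \<noteq> i \<longrightarrow> k l = c then Z i $$ (k i, c) else 0) =
      (if i = i0 then (if c = j then Z i0 $$ (a, j) else 0) else 0)" if i: "i < d" for i c
  proof (cases "i = i0")
    case True
    obtain l where "l < d" "l \<noteq> i0" using third_index[OF d i0 i0] by metis
    then have "(\<forall>l<d. l \<noteq> i \<longrightarrow> k l = c) \<longleftrightarrow> c = j" using True by (auto simp: k_def)
    then show ?thesis using True by (simp add: k_def)
  next
    case False
    obtain s where "s < d" "s \<noteq> i0" "s \<noteq> i" using third_index[OF d i0 i] by metis
    then have off: "\<not> (\<forall>l<d. l \<noteq> i \<longrightarrow> k l = c)" using False i0 aj by (auto simp: k_def)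
    show ?thesis unfolding if_not_P[OF off] using False by simp
  qed
  have "0 = (\<Sum>c<r. \<Sum>i<d. if \<forall>l<d. l \<noteq> i \<longrightarrow> k l = c then Z i $$ (k i, c) else 0)"
    using lie_algebra_stabilizer_tangent[OF _ rn Z k] d by simp
  also have "\<dots> = (\<Sum>c<r. \<Sum>i<d. if i = i0 then (if c = j then Z i0 $$ (a, j) else 0) else 0)"
    using summand by simp
  also have "\<dots> = Z i0 $$ (a, j)" using i0 j by simp
  finally show ?thesis by simp
qed

lemma lie_algebra_stabilizer_trace:
  assumes d: "2 \<le> d" and rn: "\<forall>i<d. r \<le> n i"
    and Z: "Z \<in> lie_algebra d n (stabilizer d n (diag_tensor d n r))" and j: "j < r"
  shows "(\<Sum>i<d. Z i $$ (j, j)) = 0"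
proof -
  have k: "diag_idx d j \<in> multi_idx d n" using j rn by (auto simp: diag_idx_def multi_idx_def less_le_trans)
  have summand: "(if \<forall>l<d. l \<noteq> i \<longrightarrow> diag_idx d j l = c then Z i $$ (diag_idx d j i, c) else 0) =
      (if c = j then Z i $$ (j, j) else 0)" if i: "i < d" for i c
  proof -
    obtain l where "l < d" "l \<noteq> i" using d i by (metis One_nat_def le_less_trans lessI less_2_cases_iff nat_neq_iff not_less)
    then have "(\<forall>l<d. l \<noteq> i \<longrightarrow> diag_idx d j l = c) \<longleftrightarrow> c = j" by (auto simp: diag_idx_def)
    then show ?thesis using i by (simp add: diag_idx_def)
  qed
  have "0 = (\<Sum>c<r. \<Sum>i<d. if \<forall>l<d. l \<noteq> i \<longrightarrow> diag_idx d j l = c then Z i $$ (diag_idx d j i, c) else 0)"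
    using lie_algebra_stabilizer_tangent[OF _ rn Z k] d by simp
  also have "\<dots> = (\<Sum>c<r. \<Sum>i<d. if c = j then Z i $$ (j, j) else 0)"
    using summand by simp
  also have "\<dots> = (\<Sum>c<r. if c = j then (\<Sum>i<d. Z i $$ (j, j)) else 0)"
    by (intro sum.cong) auto
  also have "\<dots> = (\<Sum>i<d. Z i $$ (j, j))" using j by simp
  finally show ?thesis by simp
qed

section \<open>Non-reductivity for r < n_i\<close>

definition tup_single :: "nat \<Rightarrow> (nat \<Rightarrow> nat) \<Rightarrow> nat \<Rightarrow> real mat \<Rightarrow> nat \<Rightarrow> real mat" where
  "tup_single d n i0 A = (\<lambda>i. if i = i0 then A else if i < d then 0\<^sub>m (n i) (n i) else 0\<^sub>m 0 0)"

lemma tup_single_mem_glprod: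
  "i0 < d \<Longrightarrow> A \<in> carrier_mat (n i0) (n i0) \<Longrightarrow> tup_single d n i0 A \<in> glprod d n"
  by (auto simp: tup_single_def glprod_def)

lemma tup_single_elem_mat_mem_sqzero_tuples:
  assumes rn: "\<forall>i<d. r \<le> n i" and i0: "i0 < d" and ab: "a \<noteq> b" "b < n i0" "r \<le> b"
  shows "tup_single d n i0 (elem_mat (n i0) a b) \<in> sqzero_tuples d n r"
  using rn i0 ab elem_mat_sqzero[OF ab(1,2)] by (auto simp: sqzero_tuples_def tup_single_def glprod_def)

lemma tup_conj_sub_unip_single:
  assumes Z: "Z \<in> glprod d n" and i0: "i0 < d" and ab: "a < n i0" "b < n i0" "a \<noteq> b"
  defines "u \<equiv> tup_unip d n (tup_single d n i0 (elem_mat (n i0) a b))"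
  shows "tup_add (tup_conj u Z) (tup_smult (-1) Z) =
    tup_single d n i0 (conj_sub (1\<^sub>m (n i0) + elem_mat (n i0) a b) (Z i0))"
proof
  fix i
  have "tup_add (tup_conj u Z) (tup_smult (-1) Z) i = conj_sub (u i) (Z i)"
    by (simp add: tup_add_def tup_conj_def tup_smult_def conj_sub_def)
  moreover have "conj_sub (u i) (Z i) = tup_single d n i0 (conj_sub (1\<^sub>m (n i0) + elem_mat (n i0) a b) (Z i0)) i"
  proof (cases "i < d")
    case True
    then show ?thesis
      using Z conj_sub_one[of "Z i" "n i"] i0 by (auto simp: u_def tup_unip_def tup_single_def glprod_def)
  next
    case False
    then show ?thesis
      using Z conj_sub_one[of "Z i" 0] i0 by (auto simp: u_def tup_unip_def tup_single_def glprod_def)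
  qed
  ultimately show "tup_add (tup_conj u Z) (tup_smult (-1) Z) i =
    tup_single d n i0 (conj_sub (1\<^sub>m (n i0) + elem_mat (n i0) a b) (Z i0)) i" by simp
qed

lemma tup_conj_sub_unip_single_twice:
  assumes Z: "Z \<in> glprod d n" and i0: "i0 < d" and ab: "a < n i0" "b < n i0" "a \<noteq> b"
  defines "u \<equiv> tup_unip d n (tup_single d n i0 (elem_mat (n i0) a b))"
  defines "\<delta> \<equiv> \<lambda>Z. tup_add (tup_conj u Z) (tup_smult (-1) Z)"
  shows "\<delta> (\<delta> Z) = tup_smult (-2 * Z i0 $$ (b, a)) (tup_single d n i0 (elem_mat (n i0) a b))"
proof -
  let ?U = "1\<^sub>m (n i0) + elem_mat (n i0) a b"
  have Zi0: "Z i0 \<in> carrier_mat (n i0) (n i0)" using Z i0 by (simp add: glprod_def)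
  have \<delta>: "\<delta> Y = tup_single d n i0 (conj_sub ?U (Y i0))" if "Y \<in> glprod d n" for Y
    unfolding \<delta>_def u_def by (rule tup_conj_sub_unip_single[OF that i0 ab])
  have "conj_sub ?U (Z i0) \<in> carrier_mat (n i0) (n i0)"
    using conj_sub_one_plus_elem_mat[OF Zi0 ab] by simp
  then have "\<delta> (\<delta> Z) = tup_single d n i0 (conj_sub ?U (conj_sub ?U (Z i0)))"
    using \<delta>[OF Z] \<delta>[OF tup_single_mem_glprod[OF i0]] by (simp add: tup_single_def)
  also have "\<dots> = tup_single d n i0 ((-2 * Z i0 $$ (b, a)) \<cdot>\<^sub>m elem_mat (n i0) a b)"
    using conj_sub_one_plus_elem_mat_twice[OF Zi0 ab] by simp
  also have "\<dots> = tup_smult (-2 * Z i0 $$ (b, a)) (tup_single d n i0 (elem_mat (n i0) a b))"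
    by (rule ext) (auto simp: tup_single_def tup_smult_def intro!: eq_matI)
  finally show ?thesis .
qed

lemma not_reductive_if_less:
  assumes d: "3 \<le> d" and rn: "\<forall>i<d. r \<le> n i" and r: "0 < r" and i0: "i0 < d" "r < n i0"
  shows "\<not> reductive d n (stabilizer d n (diag_tensor d n r))"
proof
  define L where "L = lie_algebra d n (stabilizer d n (diag_tensor d n r))"
  assume "reductive d n (stabilizer d n (diag_tensor d n r))"
  then obtain p where sub: "is_subspace_gl d n p" and cap: "p \<inter> L = {tup_zero d n}"
    and dec: "\<forall>Z\<in>glprod d n. \<exists>X\<in>p. \<exists>Y\<in>L. Z = tup_add X Y"
    and inv: "\<forall>h\<in>stabilizer d n (diag_tensor d n r). \<forall>Z\<in>p. tup_conj h Z \<in> p"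
    unfolding reductive_def L_def by blast
  let ?E = "elem_mat (n i0) 0 r"
  let ?u = "tup_unip d n (tup_single d n i0 ?E)"
  have "tup_single d n i0 (elem_mat (n i0) r 0) \<in> glprod d n"
    using i0 by (intro tup_single_mem_glprod) auto
  then obtain X W where X: "X \<in> p" and W: "W \<in> L"
    and XW: "tup_single d n i0 (elem_mat (n i0) r 0) = tup_add X W"
    using dec by blast
  have Xg: "X \<in> glprod d n" using X sub by (auto simp: is_subspace_gl_def)
  have Wi0: "W i0 \<in> carrier_mat (n i0) (n i0)" using W i0 by (simp add: L_def lie_algebra_def glprod_def)
  have "W i0 $$ (r, 0) = 0"
    using lie_algebra_stabilizer_col_offdiag[OF d rn W[unfolded L_def] i0(1)] i0 r by simp
  then have X1: "X i0 $$ (r, 0) = 1"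
    using arg_cong[OF XW, of "\<lambda>Z. Z i0 $$ (r, 0)"] Xg Wi0 i0 by (simp add: tup_single_def tup_add_def glprod_def)
  have "?u \<in> stabilizer d n (diag_tensor d n r)"
    using d i0 r rn by (intro tup_unip_mem_stabilizer tup_single_elem_mat_mem_sqzero_tuples) auto
  then have closed: "tup_add (tup_conj ?u Y) (tup_smult (-1) Y) \<in> p" if "Y \<in> p" for Y
    using that inv sub unfolding is_subspace_gl_def by blast
  have "tup_add (tup_conj ?u (tup_add (tup_conj ?u X) (tup_smult (-1) X)))
      (tup_smult (-1) (tup_add (tup_conj ?u X) (tup_smult (-1) X))) = tup_smult (-2) (tup_single d n i0 ?E)"
    using tup_conj_sub_unip_single_twice[OF Xg i0(1) _ i0(2), of 0] r i0(2) X1 by simp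
  then have "tup_smult (-2) (tup_single d n i0 ?E) \<in> p" using closed[OF closed[OF X]] by simp
  moreover have "tup_smult (-2) (tup_single d n i0 ?E) \<in> L"
    unfolding L_def using d i0 r rn
    by (intro subsetD[OF sqzero_tuples_subset_lie_algebra] sqzero_tuples_smult
        tup_single_elem_mat_mem_sqzero_tuples) auto
  ultimately have "tup_smult (-2) (tup_single d n i0 ?E) = tup_zero d n" using cap by blast
  then have "tup_smult (-2) (tup_single d n i0 ?E) i0 $$ (0, r) = tup_zero d n i0 $$ (0, r)" by simp
  then show False using i0 by (simp add: tup_smult_def tup_single_def tup_zero_def)
qed

section \<open>The trace inner product\<close>

lemma gl_inner_eq_sum:
  assumes "Z \<in> glprod d n" "W \<in> glprod d n"
  shows "gl_inner d Z W = (\<Sum>i<d. \<Sum>x<n i. \<Sum>y<n i. Z i $$ (x, y) * W i $$ (x, y))"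
  unfolding gl_inner_def using assms by (intro sum.cong) (auto simp: glprod_def mat_trace_mult_transpose)

lemma gl_inner_self_eq_0:
  assumes Z: "Z \<in> glprod d n" and "gl_inner d Z Z = 0"
  shows "Z = tup_zero d n"
proof
  fix i
  have "(\<Sum>i<d. \<Sum>x<n i. \<Sum>y<n i. Z i $$ (x, y) * Z i $$ (x, y)) = 0"
    using assms gl_inner_eq_sum[OF Z Z] by simp
  then have "Z i $$ (x, y) = 0" if "i < d" "x < n i" "y < n i" for x y
    using that by (simp add: sum_nonneg_eq_0_iff sum_nonneg)
  then show "Z i = tup_zero d n i"
    using Z by (cases "i < d") (auto simp: glprod_def tup_zero_def intro!: eq_matI)
qed

lemma tup_add_mem_glprod: "X \<in> glprod d n \<Longrightarrow> Y \<in> glprod d n \<Longrightarrow> tup_add X Y \<in> glprod d n"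
  and tup_smult_mem_glprod: "X \<in> glprod d n \<Longrightarrow> tup_smult c X \<in> glprod d n"
  and tup_zero_mem_glprod: "tup_zero d n \<in> glprod d n"
  by (auto simp: glprod_def tup_add_def tup_smult_def tup_zero_def)

lemma gl_inner_tup_add_left:
  assumes X: "X \<in> glprod d n" and Y: "Y \<in> glprod d n" and W: "W \<in> glprod d n"
  shows "gl_inner d (tup_add X Y) W = gl_inner d X W + gl_inner d Y W"
  unfolding gl_inner_eq_sum[OF tup_add_mem_glprod[OF X Y] W] gl_inner_eq_sum[OF X W]
    gl_inner_eq_sum[OF Y W] sum.distrib[symmetric]
proof (intro sum.cong refl)
  fix i x y assume i: "i \<in> {..<d}" and xy: "x \<in> {..<n i}" "y \<in> {..<n i}"
  have "X i \<in> carrier_mat (n i) (n i)" "Y i \<in> carrier_mat (n i) (n i)" using X Y i by (auto simp: glprod_def)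
  then show "tup_add X Y i $$ (x, y) * W i $$ (x, y) = X i $$ (x, y) * W i $$ (x, y) + Y i $$ (x, y) * W i $$ (x, y)"
    using xy by (simp add: tup_add_def distrib_right)
qed

lemma gl_inner_tup_smult_left:
  assumes X: "X \<in> glprod d n" and W: "W \<in> glprod d n"
  shows "gl_inner d (tup_smult c X) W = c * gl_inner d X W"
  unfolding gl_inner_eq_sum[OF tup_smult_mem_glprod[OF X] W] gl_inner_eq_sum[OF X W] sum_distrib_left
proof (intro sum.cong refl)
  fix i x y assume i: "i \<in> {..<d}" and xy: "x \<in> {..<n i}" "y \<in> {..<n i}"
  have "X i \<in> carrier_mat (n i) (n i)" using X i by (auto simp: glprod_def)
  then show "tup_smult c X i $$ (x, y) * W i $$ (x, y) = c * (X i $$ (x, y) * W i $$ (x, y))"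
    using xy by (simp add: tup_smult_def)
qed

lemma gl_inner_tup_zero_left:
  assumes "W \<in> glprod d n"
  shows "gl_inner d (tup_zero d n) W = 0"
  unfolding gl_inner_eq_sum[OF tup_zero_mem_glprod assms] by (simp add: tup_zero_def)

lemma orth_complement_subspace:
  assumes S: "S \<subseteq> glprod d n"
  shows "is_subspace_gl d n (orth_complement d n S)"
  using S unfolding is_subspace_gl_def orth_complement_def
  by (auto simp: tup_add_mem_glprod tup_smult_mem_glprod tup_zero_mem_glprod gl_inner_tup_add_left
      gl_inner_tup_smult_left gl_inner_tup_zero_left subset_iff)

lemma orth_complement_inter_subset:
  assumes "S \<subseteq> glprod d n"
  shows "orth_complement d n S \<inter> S \<subseteq> {tup_zero d n}"
  using assms gl_inner_self_eq_0 by (fastforce simp: orth_complement_def)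

lemma gl_inner_diagonal_right:
  assumes Z: "Z \<in> glprod d n" and W: "W \<in> glprod d n"
    and diag: "\<And>i x y. i < d \<Longrightarrow> x < n i \<Longrightarrow> y < n i \<Longrightarrow> x \<noteq> y \<Longrightarrow> W i $$ (x, y) = 0"
  shows "gl_inner d Z W = (\<Sum>i<d. \<Sum>x<n i. Z i $$ (x, x) * W i $$ (x, x))"
  unfolding gl_inner_eq_sum[OF Z W]
proof (intro sum.cong refl)
  fix i x assume "i \<in> {..<d}" "x \<in> {..<n i}"
  then have "(\<Sum>y<n i. Z i $$ (x, y) * W i $$ (x, y)) = (\<Sum>y<n i. if y = x then Z i $$ (x, x) * W i $$ (x, x) else 0)"
    using diag by (intro sum.cong) auto
  then show "(\<Sum>y<n i. Z i $$ (x, y) * W i $$ (x, y)) = Z i $$ (x, x) * W i $$ (x, x)"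
    using \<open>x \<in> {..<n i}\<close> by simp
qed

section \<open>The case n_i = r\<close>

text \<open>Changing k in slot s keeps it non-constant, so g_s kills the vector of these products.\<close>

lemma stabilizer_prod_off_slot_eq_0:
  assumes d: "0 < d" and nr: "\<forall>i<d. n i = r" and g: "g \<in> stabilizer d n (diag_tensor d n r)"
    and s: "s < d" and k: "k \<in> multi_idx d n"
    and pq: "p < d" "q < d" "p \<noteq> s" "q \<noteq> s" "k p \<noteq> k q" and c: "c < r"
  shows "(\<Prod>i\<in>{..<d} - {s}. g i $$ (k i, c)) = 0"
proof -
  define w where "w = vec r (\<lambda>c. \<Prod>i\<in>{..<d} - {s}. g i $$ (k i, c))"
  have gs: "g s \<in> carrier_mat r r" "invertible_mat (g s)"
    using g s nr by (auto simp: stabilizer_def GLprod_def)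
  have "(g s *\<^sub>v w) $ e = 0" if e: "e < r" for e
  proof -
    have k': "k(s := e) \<in> multi_idx d n" using k e s nr by (auto simp: multi_idx_def)
    have neq: "(k(s := e)) p \<noteq> (k(s := e)) q" using pq by simp
    have "\<not> (\<exists>c<r. \<forall>i<d. (k(s := e)) i = c)"
    proof
      assume "\<exists>c<r. \<forall>i<d. (k(s := e)) i = c"
      then obtain c where "\<forall>i<d. (k(s := e)) i = c" by blast
      then have "(k(s := e)) p = c" "(k(s := e)) q = c" using pq(1,2) by blast+
      then show False using neq by simp
    qed
    then have "0 = (\<Sum>c<r. \<Prod>i<d. g i $$ ((k(s := e)) i, c))"
      using stabilizer_diag_tensor_eq[OF d _ g k'] nr by simp
    also have "\<dots> = (\<Sum>c<r. g s $$ (e, c) * w $ c)"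
    proof (rule sum.cong[OF refl])
      fix c assume "c \<in> {..<r}"
      have "(\<Prod>i<d. g i $$ ((k(s := e)) i, c)) =
          g s $$ ((k(s := e)) s, c) * (\<Prod>i\<in>{..<d} - {s}. g i $$ ((k(s := e)) i, c))"
        using s by (intro prod.remove) auto
      also have "(\<Prod>i\<in>{..<d} - {s}. g i $$ ((k(s := e)) i, c)) = (\<Prod>i\<in>{..<d} - {s}. g i $$ (k i, c))"
        by (intro prod.cong) auto
      also have "\<dots> = w $ c" using \<open>c \<in> {..<r}\<close> by (simp add: w_def)
      finally show "(\<Prod>i<d. g i $$ ((k(s := e)) i, c)) = g s $$ (e, c) * w $ c" by simp
    qed
    also have "\<dots> = (g s *\<^sub>v w) $ e"
      using gs e by (simp add: scalar_prod_def lessThan_atLeast0 w_def)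
    finally show ?thesis by simp
  qed
  then have "g s *\<^sub>v w = 0\<^sub>v r" using gs by (auto intro: eq_vecI)
  moreover have "w \<in> carrier_vec r" by (simp add: w_def)
  ultimately have "w = 0\<^sub>v r" using invertible_mat_mult_vec_eq_0[OF gs] by blast
  then have "w $ c = 0" using c by simp
  then show ?thesis using c by (simp add: w_def)
qed

lemma stabilizer_col_support_distinct:
  assumes d: "3 \<le> d" and nr: "\<forall>i<d. n i = r" and g: "g \<in> stabilizer d n (diag_tensor d n r)"
    and pq: "p < d" "q < d" "p \<noteq> q" and abc: "a < r" "b < r" "c < r"
    and nz: "g p $$ (a, c) \<noteq> 0" "g q $$ (b, c) \<noteq> 0"
  shows "a = b"
proof (rule ccontr)
  assume ab: "a \<noteq> b"
  obtain s where s: "s < d" "s \<noteq> p" "s \<noteq> q" by (rule third_index[OF d pq(1,2)])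
  have "\<exists>x. x < r \<and> g i $$ (x, c) \<noteq> 0" if "i < d" for i
  proof -
    have "g i \<in> carrier_mat r r" "invertible_mat (g i)"
      using g nr that by (auto simp: stabilizer_def GLprod_def)
    then show ?thesis using invertible_mat_col_nonzero abc(3) by metis
  qed
  then obtain \<rho> where \<rho>: "\<And>i. i < d \<Longrightarrow> \<rho> i < r \<and> g i $$ (\<rho> i, c) \<noteq> 0"
    by (metis someI_ex)
  define k where "k i = (if i = p then a else if i = q then b else if i < d then \<rho> i else 0)" for i
  have k: "k \<in> multi_idx d n" using \<rho> abc nr pq by (auto simp: k_def multi_idx_def)
  have "(\<Prod>i\<in>{..<d} - {s}. g i $$ (k i, c)) = 0"
    by (rule stabilizer_prod_off_slot_eq_0[OF _ nr g s(1) k pq(1,2) s(2,3)[symmetric] _ abc(3)])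
      (use d ab pq in \<open>auto simp: k_def\<close>)
  moreover have "g i $$ (k i, c) \<noteq> 0" if "i \<in> {..<d} - {s}" for i
    using nz \<rho> that by (auto simp: k_def)
  ultimately show False by simp
qed

lemma stabilizer_support_eq:
  assumes d: "3 \<le> d" and nr: "\<forall>i<d. n i = r" and g: "g \<in> stabilizer d n (diag_tensor d n r)"
    and ij: "i < d" "j < d" and ac: "a < r" "c < r" and nz: "g i $$ (a, c) \<noteq> 0"
  shows "g j $$ (a, c) \<noteq> 0"
proof (cases "i = j")
  case False
  have "g j \<in> carrier_mat r r" "invertible_mat (g j)"
    using g nr ij by (auto simp: stabilizer_def GLprod_def)
  then obtain b where b: "b < r" "g j $$ (b, c) \<noteq> 0" using invertible_mat_col_nonzero ac(2) by blast
  then have "a = b" using stabilizer_col_support_distinct[OF d nr g ij False ac(1) b(1) ac(2) nz] by blast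
  then show ?thesis using b by simp
qed (use nz in simp)

lemma stabilizer_col_support_unique:
  assumes d: "3 \<le> d" and nr: "\<forall>i<d. n i = r" and g: "g \<in> stabilizer d n (diag_tensor d n r)"
    and i: "i < d" and abc: "a < r" "b < r" "c < r"
    and nz: "g i $$ (a, c) \<noteq> 0" "g i $$ (b, c) \<noteq> 0"
  shows "a = b"
proof -
  obtain j where j: "j < d" "j \<noteq> i" by (rule third_index[OF d i i])
  then have "g j $$ (a, c) \<noteq> 0" using stabilizer_support_eq[OF d nr g i j(1) abc(1,3) nz(1)] by blast
  then show ?thesis using stabilizer_col_support_distinct[OF d nr g j(1) i j(2) abc(1,2,3) _ nz(2)] by blast
qed

definition common_diag :: "nat \<Rightarrow> (nat \<Rightarrow> nat) \<Rightarrow> nat \<Rightarrow> (nat \<Rightarrow> real mat) set" where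
  "common_diag d n r = {Z \<in> glprod d n. \<forall>i<d. \<forall>j<d. \<forall>a<r. Z i $$ (a, a) = Z j $$ (a, a)}"

lemma stabilizer_index_conj_diag:
  assumes d: "3 \<le> d" and nr: "\<forall>i<d. n i = r" and h: "h \<in> stabilizer d n (diag_tensor d n r)"
    and i: "i < d" and A: "A \<in> carrier_mat r r" and a: "a < r"
  shows "(h i * A * mat_inv (h i)) $$ (a, a) = (\<Sum>x<r. if h 0 $$ (a, x) \<noteq> 0 then A $$ (x, x) else 0)"
proof -
  have hi: "h i \<in> carrier_mat r r" "invertible_mat (h i)"
    using h nr i by (auto simp: stabilizer_def GLprod_def)
  have "(h i * A * mat_inv (h i)) $$ (a, a) = (\<Sum>x<r. if h i $$ (a, x) \<noteq> 0 then A $$ (x, x) else 0)"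
  proof (rule index_conj_diag_monomial[OF hi A a])
    fix b c assume "b < r" "c < r" "h i $$ (a, c) \<noteq> 0" "h i $$ (b, c) \<noteq> 0"
    then show "b = a" by (intro stabilizer_col_support_unique[OF d nr h i _ a]) auto
  qed
  also have "\<dots> = (\<Sum>x<r. if h 0 $$ (a, x) \<noteq> 0 then A $$ (x, x) else 0)"
  proof (rule sum.cong[OF refl])
    fix x assume "x \<in> {..<r}"
    then have x: "x < r" by simp
    have d0: "0 < d" using d by simp
    have "h i $$ (a, x) \<noteq> 0 \<longleftrightarrow> h 0 $$ (a, x) \<noteq> 0"
      using stabilizer_support_eq[OF d nr h i d0 a x] stabilizer_support_eq[OF d nr h d0 i a x] by blast
    then show "(if h i $$ (a, x) \<noteq> 0 then A $$ (x, x) else 0) = (if h 0 $$ (a, x) \<noteq> 0 then A $$ (x, x) else 0)"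
      by simp
  qed
  finally show ?thesis .
qed

lemma tup_conj_mem_common_diag:
  assumes d: "3 \<le> d" and nr: "\<forall>i<d. n i = r" and h: "h \<in> stabilizer d n (diag_tensor d n r)"
    and Z: "Z \<in> common_diag d n r"
  shows "tup_conj h Z \<in> common_diag d n r"
proof -
  have Zc: "Z i \<in> carrier_mat r r" if "i < d" for i
    using Z nr that by (auto simp: common_diag_def glprod_def)
  have "tup_conj h Z i \<in> carrier_mat (n i) (n i)" if i: "i < d" for i
  proof -
    have "h i \<in> carrier_mat r r" "invertible_mat (h i)" using h nr i by (auto simp: stabilizer_def GLprod_def)
    then show ?thesis using invertible_mat_inv(1)[of "h i" r] Zc[OF i] nr i by (simp add: tup_conj_def)
  qed
  moreover have "tup_conj h Z i = 0\<^sub>m 0 0" if "d \<le> i" for i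
  proof -
    have "h i = 1\<^sub>m 0" using h that by (simp add: stabilizer_def GLprod_def)
    moreover have "Z i = 0\<^sub>m 0 0" using Z that by (simp add: common_diag_def glprod_def)
    ultimately show ?thesis by (auto simp: tup_conj_def intro!: eq_matI)
  qed
  ultimately have "tup_conj h Z \<in> glprod d n" by (simp add: glprod_def)
  moreover have "tup_conj h Z i $$ (a, a) = (\<Sum>x<r. if h 0 $$ (a, x) \<noteq> 0 then Z 0 $$ (x, x) else 0)"
    if i: "i < d" and a: "a < r" for i a
    unfolding tup_conj_def stabilizer_index_conj_diag[OF d nr h i Zc[OF i] a]
  proof (rule sum.cong[OF refl])
    fix x assume "x \<in> {..<r}"
    then have x: "x < r" by simp
    have d0: "0 < d" using d by simp
    have "Z i $$ (x, x) = Z 0 $$ (x, x)" using Z i d0 x unfolding common_diag_def by blast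
    then show "(if h 0 $$ (a, x) \<noteq> 0 then Z i $$ (x, x) else 0) = (if h 0 $$ (a, x) \<noteq> 0 then Z 0 $$ (x, x) else 0)"
      by simp
  qed
  ultimately show ?thesis unfolding common_diag_def by simp
qed

lemma lie_algebra_stabilizer_eq:
  assumes d: "3 \<le> d" and nr: "\<forall>i<d. n i = r"
  shows "lie_algebra d n (stabilizer d n (diag_tensor d n r)) = {Z \<in> glprod d n.
    (\<forall>i<d. \<forall>a<r. \<forall>b<r. a \<noteq> b \<longrightarrow> Z i $$ (a, b) = 0) \<and> (\<forall>c<r. (\<Sum>i<d. Z i $$ (c, c)) = 0)}"
    (is "_ = ?D")
proof (intro equalityI subsetI)
  have rn: "\<forall>i<d. r \<le> n i" using nr by simp
  fix Z assume Z: "Z \<in> lie_algebra d n (stabilizer d n (diag_tensor d n r))"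
  have "Z i $$ (a, b) = 0" if "i < d" "a < r" "b < r" "a \<noteq> b" for i a b
    using lie_algebra_stabilizer_col_offdiag[OF d rn Z] that nr by simp
  moreover have "(\<Sum>i<d. Z i $$ (c, c)) = 0" if "c < r" for c
    using lie_algebra_stabilizer_trace[OF _ rn Z that] d by simp
  ultimately show "Z \<in> ?D" using Z by (simp add: lie_algebra_def)
next
  have rn: "\<forall>i<d. r \<le> n i" using nr by simp
  fix Z assume "Z \<in> ?D"
  then show "Z \<in> lie_algebra d n (stabilizer d n (diag_tensor d n r))"
    using d nr by (intro diagonal_tuple_mem_lie_algebra[OF _ rn]) auto
qed

lemma orth_complement_lie_algebra_subset_common_diag:
  assumes d: "3 \<le> d" and nr: "\<forall>i<d. n i = r"
  shows "orth_complement d n (lie_algebra d n (stabilizer d n (diag_tensor d n r))) \<subseteq> common_diag d n r"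
proof
  fix Z assume Z: "Z \<in> orth_complement d n (lie_algebra d n (stabilizer d n (diag_tensor d n r)))"
  then have Zg: "Z \<in> glprod d n" by (simp add: orth_complement_def)
  have eq: "Z i $$ (a, a) = Z j $$ (a, a)" if ij: "i < d" "j < d" "i \<noteq> j" and a: "a < r" for i j a
  proof -
    define c where "c l = (of_bool (l = i) - of_bool (l = j) :: real)" for l
    define W where "W l = (if l < d then mat_diag r (\<lambda>x. if x = a then c l else 0) else 0\<^sub>m 0 0)" for l
    have Wg: "W \<in> glprod d n" using nr by (auto simp: W_def glprod_def)
    have "(\<Sum>l<d. c l) = 0" using ij by (simp add: c_def sum_subtractf)
    then have "(\<Sum>l<d. if x = a then c l else 0) = 0" for x by (cases "x = a") simp_all
    then have "W \<in> lie_algebra d n (stabilizer d n (diag_tensor d n r))"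
      using Wg nr unfolding lie_algebra_stabilizer_eq[OF d nr] by (auto simp: W_def mat_diag_def)
    then have "0 = gl_inner d Z W" using Z by (auto simp: orth_complement_def)
    also have "\<dots> = (\<Sum>l<d. \<Sum>x<r. Z l $$ (x, x) * (if x = a then c l else 0))"
      using gl_inner_diagonal_right[OF Zg Wg] nr by (simp add: W_def mat_diag_def)
    also have "\<dots> = (\<Sum>l<d. Z l $$ (a, a) * c l)"
      using a by (simp add: if_distrib cong: if_cong)
    also have "\<dots> = Z i $$ (a, a) - Z j $$ (a, a)"
      using ij by (simp add: c_def right_diff_distrib sum_subtractf)
    finally show ?thesis by simp
  qed
  have "Z i $$ (a, a) = Z j $$ (a, a)" if "i < d" "j < d" "a < r" for i j a
    using eq[of i j a] that by (cases "i = j") simp_all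
  then show "Z \<in> common_diag d n r" using Zg unfolding common_diag_def by blast
qed

lemma common_diag_subset_orth_complement_lie_algebra:
  assumes d: "3 \<le> d" and nr: "\<forall>i<d. n i = r"
  shows "common_diag d n r \<subseteq> orth_complement d n (lie_algebra d n (stabilizer d n (diag_tensor d n r)))"
proof
  fix Z assume Z: "Z \<in> common_diag d n r"
  have Zg: "Z \<in> glprod d n" and Z0: "\<And>l x. l < d \<Longrightarrow> x < r \<Longrightarrow> Z l $$ (x, x) = Z 0 $$ (x, x)"
    using Z d unfolding common_diag_def by blast+
  have "gl_inner d Z W = 0" if "W \<in> lie_algebra d n (stabilizer d n (diag_tensor d n r))" for W
  proof -
    have W: "W \<in> glprod d n" "\<And>i x y. i < d \<Longrightarrow> x < r \<Longrightarrow> y < r \<Longrightarrow> x \<noteq> y \<Longrightarrow> W i $$ (x, y) = 0"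
      "\<And>x. x < r \<Longrightarrow> (\<Sum>l<d. W l $$ (x, x)) = 0"
      using that unfolding lie_algebra_stabilizer_eq[OF d nr] by auto
    have "gl_inner d Z W = (\<Sum>l<d. \<Sum>x<r. Z l $$ (x, x) * W l $$ (x, x))"
      using gl_inner_diagonal_right[OF Zg W(1)] W(2) nr by simp
    also have "\<dots> = (\<Sum>l<d. \<Sum>x<r. Z 0 $$ (x, x) * W l $$ (x, x))"
    proof (intro sum.cong refl)
      fix l x assume "l \<in> {..<d}" "x \<in> {..<r}"
      then show "Z l $$ (x, x) * W l $$ (x, x) = Z 0 $$ (x, x) * W l $$ (x, x)" using Z0[of l x] by simp
    qed
    also have "\<dots> = (\<Sum>x<r. \<Sum>l<d. Z 0 $$ (x, x) * W l $$ (x, x))"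
      by (rule sum.swap)
    also have "\<dots> = (\<Sum>x<r. Z 0 $$ (x, x) * (\<Sum>l<d. W l $$ (x, x)))"
      by (simp add: sum_distrib_left)
    finally show ?thesis using W(3) by simp
  qed
  then show "Z \<in> orth_complement d n (lie_algebra d n (stabilizer d n (diag_tensor d n r)))"
    using Zg by (simp add: orth_complement_def)
qed

lemma orth_complement_lie_algebra_eq_common_diag:
  assumes d: "3 \<le> d" and nr: "\<forall>i<d. n i = r"
  shows "orth_complement d n (lie_algebra d n (stabilizer d n (diag_tensor d n r))) = common_diag d n r"
  using orth_complement_lie_algebra_subset_common_diag[OF d nr]
    common_diag_subset_orth_complement_lie_algebra[OF d nr] by (rule equalityI)

lemma exists_common_diag_plus_lie_algebra:
  assumes d: "3 \<le> d" and nr: "\<forall>i<d. n i = r" and Z: "Z \<in> glprod d n"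
  shows "\<exists>X\<in>common_diag d n r. \<exists>Y\<in>lie_algebra d n (stabilizer d n (diag_tensor d n r)). Z = tup_add X Y"
proof -
  have Zc: "Z i \<in> carrier_mat r r" if "i < d" for i using Z nr that by (simp add: glprod_def)
  have Zd: "Z i = 0\<^sub>m 0 0" if "d \<le> i" for i using Z that by (simp add: glprod_def)
  define avg where "avg x = (\<Sum>i<d. Z i $$ (x, x)) / real d" for x
  define X where "X i = (if i < d then mat r r (\<lambda>(x, y). if x = y then avg x else Z i $$ (x, y))
    else 0\<^sub>m 0 0)" for i
  define Y where "Y i = (if i < d then mat_diag r (\<lambda>x. Z i $$ (x, x) - avg x) else 0\<^sub>m 0 0)" for i
  have "X \<in> common_diag d n r" using nr by (auto simp: common_diag_def glprod_def X_def)
  moreover have "Y \<in> lie_algebra d n (stabilizer d n (diag_tensor d n r))"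
  proof -
    have "(\<Sum>i<d. Z i $$ (c, c) - avg c) = 0" for c
      using d by (simp add: sum_subtractf avg_def)
    then show ?thesis
      unfolding lie_algebra_stabilizer_eq[OF d nr] using nr by (auto simp: Y_def glprod_def mat_diag_def)
  qed
  moreover have "Z = tup_add X Y"
  proof
    fix i show "Z i = tup_add X Y i"
      using Zc[of i] Zd[of i] by (cases "i < d") (auto simp: tup_add_def X_def Y_def mat_diag_def)
  qed
  ultimately show ?thesis by blast
qed

lemma reductive_if_eq:
  assumes d: "3 \<le> d" and nr: "\<forall>i<d. n i = r"
  shows "reductive d n (stabilizer d n (diag_tensor d n r))"
proof -
  let ?L = "lie_algebra d n (stabilizer d n (diag_tensor d n r))"
  have L: "?L \<subseteq> glprod d n" by (auto simp: lie_algebra_def)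
  have orth: "orth_complement d n ?L = common_diag d n r"
    by (rule orth_complement_lie_algebra_eq_common_diag[OF d nr])
  have "tup_zero d n \<in> ?L"
    unfolding lie_algebra_stabilizer_eq[OF d nr] using nr by (auto simp: tup_zero_def glprod_def)
  moreover have "is_subspace_gl d n (orth_complement d n ?L)" by (rule orth_complement_subspace[OF L])
  ultimately have "orth_complement d n ?L \<inter> ?L = {tup_zero d n}"
    using orth_complement_inter_subset[OF L] by (auto simp: is_subspace_gl_def)
  then show ?thesis
    unfolding reductive_def
    using orth_complement_subspace[OF L] exists_common_diag_plus_lie_algebra[OF d nr]
      tup_conj_mem_common_diag[OF d nr]
    by (intro exI[of _ "orth_complement d n ?L"]) (simp add: orth)
qed

theorem mainTheorem4:
  fixes d r :: nat and n :: "nat \<Rightarrow> nat"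
  assumes "d \<ge> 3" and "\<forall>i<d. n i \<ge> 2"
    and "r > 0" and "\<forall>i<d. r \<le> n i"
  defines "H \<equiv> stabilizer d n (diag_tensor d n r)"
  shows "(reductive d n H \<longleftrightarrow> (\<forall>i<d. n i = r)) \<and>
         ((\<forall>i<d. n i = r) \<longrightarrow>
            (\<forall>h\<in>H. tup_conj h ` orth_complement d n (lie_algebra d n H)
                     \<subseteq> orth_complement d n (lie_algebra d n H)))"
proof (intro conjI impI ballI iffI allI)
  fix i assume "reductive d n H" and i: "i < d"
  then have "\<not> r < n i" using not_reductive_if_less[OF assms(1,4,3) i] unfolding H_def by blast
  then show "n i = r" using assms(4) i by (simp add: not_less le_antisym)
next
  assume "\<forall>i<d. n i = r"
  then show "reductive d n H" unfolding H_def by (rule reductive_if_eq[OF assms(1)])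
next
  fix h assume nr: "\<forall>i<d. n i = r" and "h \<in> H"
  then show "tup_conj h ` orth_complement d n (lie_algebra d n H) \<subseteq> orth_complement d n (lie_algebra d n H)"
    unfolding H_def orth_complement_lie_algebra_eq_common_diag[OF assms(1) nr]
    using tup_conj_mem_common_diag[OF assms(1) nr] by blast
qed

end
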